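(* For every sequence $S\in[n]^m$ and every finite set $X\subset\mathbb Q\setminus[n]$ of auxiliary elements, $\mathrm{OPT}(S)=\mathrm{OPT}_X(S)$.
   Context: Dynamic BST model on a finite key set $K\subset\mathbb Q$: an algorithm chooses an initial BST on $K$. To serve access $s_t$ it touches a set of nodes forming a connected subtree containing the root and $s_t$, may rearrange the touched nodes into any BST shape (untouched subtrees reattached validly), and pays the number of touched nodes. $\mathrm{OPT}(S)$ is the minimum total cost of serving $S$ over all offline algorithms with key set $K=[n]$. $\mathrm{OPT}_X(S)$ is the same minimum with key set $K=[n]\cup X$; the accesses are still the keys of $S$, all of which lie in $[n]$. *)

theory Defs
  imports Complex_Main "HOL-Library.Tree"
begin

text \<open>P is a connected subtree of t containing the root (or empty).\<close>
fun top_part :: "'a set \<Rightarrow> 'a tree \<Rightarrow> bool" where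
  "top_part P Leaf = (P = {})"
| "top_part P (Node l x r) =
     (P = {} \<or> (x \<in> P \<and> P \<subseteq> insert x (set_tree l \<union> set_tree r)
        \<and> top_part (P \<inter> set_tree l) l \<and> top_part (P \<inter> set_tree r) r))"

fun hanging :: "'a set \<Rightarrow> 'a tree \<Rightarrow> 'a tree set" where
  "hanging P Leaf = {}"
| "hanging P (Node l x r) =
     (if x \<in> P then hanging P l \<union> hanging P r else {Node l x r})"

text \<open>One access s: touch P (connected, containing root and s), rearrange P into any BST
  shape with the untouched subtrees reattached; cost = number of touched nodes.\<close>
definition bst_step :: "'a::linorder \<Rightarrow> 'a tree \<Rightarrow> 'a tree \<Rightarrow> nat \<Rightarrow> bool" where
  "bst_step s T T' c \<longleftrightarrow>
     (\<exists>P. s \<in> P \<and> top_part P T \<and> top_part P T' \<and> hanging P T' = hanging P T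
          \<and> bst T' \<and> set_tree T' = set_tree T \<and> c = card P)"

inductive serve :: "'a::linorder tree \<Rightarrow> 'a list \<Rightarrow> nat \<Rightarrow> bool" where
  serve_Nil: "serve T [] 0"
| serve_Cons: "bst_step s T T' c \<Longrightarrow> serve T' ss k \<Longrightarrow> serve T (s # ss) (c + k)"

definition serve_costs :: "'a::linorder set \<Rightarrow> 'a list \<Rightarrow> nat set" where
  "serve_costs K S = {c. \<exists>T. bst T \<and> set_tree T = K \<and> serve T S c}"

definition OPT_keys :: "'a::linorder set \<Rightarrow> 'a list \<Rightarrow> nat" where
  "OPT_keys K S = Inf (serve_costs K S)"

definition nset :: "nat \<Rightarrow> rat set" where
  "nset n = of_nat ` {1..n}"

definition OPT :: "nat \<Rightarrow> rat list \<Rightarrow> nat" where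
  "OPT n S = OPT_keys (nset n) S"

definition OPT_X :: "nat \<Rightarrow> rat set \<Rightarrow> rat list \<Rightarrow> nat" where
  "OPT_X n X S = OPT_keys (nset n \<union> X) S"

end

theory Submission
  imports Defs
begin

text \<open>An extra key x can be
  inserted as a leaf into every tree of an execution: in T and T' it falls into the same gap of
  the touched set, hence into corresponding hanging subtrees, so every step stays valid at the
  same cost. Conversely, x can be deleted from every tree by the usual predecessor replacement:
  if x is untouched the touched set is unchanged, and if x is touched its predecessor takes its
  place, so the touched set does not grow. The auxiliary keys are then added one at a time.\<close>

lemma top_part_NodeI:
  "y \<in> P \<Longrightarrow> P \<subseteq> insert y (set_tree l \<union> set_tree r) \<Longrightarrow>
   top_part (P \<inter> set_tree l) l \<Longrightarrow> top_part (P \<inter> set_tree r) r \<Longrightarrow> top_part P \<langle>l, y, r\<rangle>"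
  by simp

lemma top_part_subset: "top_part P t \<Longrightarrow> P \<subseteq> set_tree t"
  by (induction t arbitrary: P) auto

lemma top_part_empty [simp]: "top_part {} t"
  by (cases t) auto

lemma hanging_cong: "P \<inter> set_tree t = P' \<inter> set_tree t \<Longrightarrow> hanging P t = hanging P' t"
  by (induction t) auto

lemma hanging_Node_in:
  "y \<in> P \<Longrightarrow> hanging P \<langle>l, y, r\<rangle> = hanging (P \<inter> set_tree l) l \<union> hanging (P \<inter> set_tree r) r"
  using hanging_cong[of P l "P \<inter> set_tree l"] hanging_cong[of P r "P \<inter> set_tree r"] by auto

lemma hanging_empty: "hanging {} t = (if t = Leaf then {} else {t})"
  by (cases t) auto

lemma set_tree_hanging_subset: "H \<in> hanging P t \<Longrightarrow> set_tree H \<subseteq> set_tree t"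
  by (induction t) (auto split: if_splits)

lemma Leaf_notin_hanging: "Leaf \<notin> hanging P t"
  by (induction t) auto

lemma hanging_Diff_Leaf [simp]: "hanging P t - {Leaf} = hanging P t"
  using Leaf_notin_hanging by blast

lemma image_Un_fixed_right_minus_Leaf:
  "(\<And>G. G \<in> Gs \<Longrightarrow> f G = G) \<Longrightarrow> Leaf \<notin> Gs \<Longrightarrow> f ` (Hs \<union> Gs) - {Leaf} = (f ` Hs - {Leaf}) \<union> Gs"
  by (force simp: image_Un)

lemma image_Un_fixed_left_minus_Leaf:
  "(\<And>G. G \<in> Gs \<Longrightarrow> f G = G) \<Longrightarrow> Leaf \<notin> Gs \<Longrightarrow> f ` (Gs \<union> Hs) - {Leaf} = Gs \<union> (f ` Hs - {Leaf})"
  by (force simp: image_Un)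

fun ins :: "'a::linorder \<Rightarrow> 'a tree \<Rightarrow> 'a tree" where
  "ins x Leaf = \<langle>Leaf, x, Leaf\<rangle>"
| "ins x \<langle>l, y, r\<rangle> =
     (if x < y then \<langle>ins x l, y, r\<rangle> else if y < x then \<langle>l, y, ins x r\<rangle> else \<langle>l, y, r\<rangle>)"

lemma set_tree_ins [simp]: "set_tree (ins x t) = insert x (set_tree t)"
  by (induction t) auto

lemma bst_ins: "bst t \<Longrightarrow> bst (ins x t)"
  by (induction t) auto

lemma top_part_ins: "top_part P t \<Longrightarrow> x \<notin> P \<Longrightarrow> top_part P (ins x t)"
proof (induction t arbitrary: P)
  case (Node l y r)
  then show ?case
    by (cases "P = {}") (auto simp: Int_insert_right)
qed simp

definition same_gap :: "'a::linorder set \<Rightarrow> 'a \<Rightarrow> 'a \<Rightarrow> bool" where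
  "same_gap P x z \<longleftrightarrow> (\<forall>p\<in>P. p < x \<longleftrightarrow> p < z)"

abbreviation shares_gap :: "'a::linorder set \<Rightarrow> 'a \<Rightarrow> 'a tree \<Rightarrow> bool" where
  "shares_gap P x H \<equiv> \<exists>z\<in>set_tree H. same_gap P x z"

text \<open>Inserting an untouched key x lands it in the hanging subtree lying in the same gap of the
  touched set P, or makes it a new hanging leaf if there is none. The outcome depends only on P and
  on the hanging subtrees, not on the shape of the top part.\<close>

definition ins_hanging :: "'a::linorder set \<Rightarrow> 'a \<Rightarrow> 'a tree set \<Rightarrow> 'a tree set" where
  "ins_hanging P x Hs =
     (\<lambda>H. if shares_gap P x H then ins x H else H) ` Hs \<union>
     (if \<exists>H\<in>Hs. shares_gap P x H then {} else {\<langle>Leaf, x, Leaf\<rangle>})"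

lemma ins_hanging_Un:
  assumes "y \<in> P" and "P \<subseteq> insert y (A \<union> B)"
    and "\<And>H. H \<in> Hs \<Longrightarrow> set_tree H \<subseteq> A" and "\<And>G. G \<in> Gs \<Longrightarrow> set_tree G \<subseteq> B"
    and "(\<forall>w\<in>insert x A. w < y) \<and> (\<forall>z\<in>B. y < z) \<or> (\<forall>w\<in>insert x A. y < w) \<and> (\<forall>z\<in>B. z < y)"
  shows "ins_hanging P x (Hs \<union> Gs) = ins_hanging (P \<inter> A) x Hs \<union> Gs"
proof -
  have gap_A: "same_gap (P \<inter> A) x z \<longleftrightarrow> same_gap P x z" if "z \<in> A" for z
  proof -
    have "p < x \<longleftrightarrow> p < z" if "p \<in> P - A" for p
    proof -
      have "p = y \<or> p \<in> B"
        using assms(2) that by blast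
      then show ?thesis
        using assms(5) \<open>z \<in> A\<close> by (auto; meson less_trans less_asym)
    qed
    then show ?thesis
      unfolding same_gap_def by blast
  qed
  have gap_B: "\<not> same_gap P x z" if "z \<in> B" for z
    using assms(1,5) that unfolding same_gap_def by (meson insertI1 order.asym)
  have "(\<exists>H\<in>Hs \<union> Gs. shares_gap P x H) \<longleftrightarrow> (\<exists>H\<in>Hs. shares_gap (P \<inter> A) x H)"
    using assms(3,4) gap_A gap_B by blast
  moreover have "(\<lambda>H. if shares_gap P x H then ins x H else H) ` (Hs \<union> Gs) =
      (\<lambda>H. if shares_gap (P \<inter> A) x H then ins x H else H) ` Hs \<union> Gs"
  proof -
    have "shares_gap P x H \<longleftrightarrow> shares_gap (P \<inter> A) x H" if "H \<in> Hs" for H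
      using assms(3)[OF that] gap_A by blast
    moreover have "\<not> shares_gap P x G" if "G \<in> Gs" for G
      using assms(4)[OF that] gap_B by blast
    ultimately show ?thesis
      by (auto simp: image_Un intro!: image_cong)
  qed
  ultimately show ?thesis
    unfolding ins_hanging_def by auto
qed

lemma hanging_ins:
  "bst t \<Longrightarrow> top_part P t \<Longrightarrow> x \<notin> set_tree t \<Longrightarrow>
   hanging P (ins x t) = ins_hanging P x (hanging P t)"
proof (induction t arbitrary: P)
  case Leaf
  then show ?case by (simp add: ins_hanging_def)
next
  case (Node l y r)
  show ?case
  proof (cases "P = {}")
    case True
    then show ?thesis by (auto simp: ins_hanging_def same_gap_def hanging_empty)
  next
    case False
    with Node.prems have y: "y \<in> P" and P: "P \<subseteq> insert y (set_tree l \<union> set_tree r)"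
      and tl: "top_part (P \<inter> set_tree l) l" and tr: "top_part (P \<inter> set_tree r) r" by auto
    have xP: "x \<notin> P"
      using top_part_subset Node.prems(2,3) by blast
    consider "x < y" | "y < x"
      using Node.prems(3) by (cases x y rule: linorder_cases) auto
    then show ?thesis
    proof cases
      case 1
      have sep: "(\<forall>w\<in>insert x (set_tree l). w < y) \<and> (\<forall>z\<in>set_tree r. y < z)"
        using 1 Node.prems(1) by simp
      have "hanging P (ins x \<langle>l, y, r\<rangle>) = hanging (P \<inter> set_tree l) (ins x l) \<union> hanging (P \<inter> set_tree r) r"
        using 1 hanging_Node_in[OF y, of "ins x l" r] xP by (simp add: Int_insert_right_if0)
      also have "\<dots> = ins_hanging (P \<inter> set_tree l) x (hanging (P \<inter> set_tree l) l) \<union> hanging (P \<inter> set_tree r) r"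
        using Node.IH(1)[OF _ tl] Node.prems(1,3) by simp
      also have "\<dots> = ins_hanging P x (hanging P \<langle>l, y, r\<rangle>)"
        unfolding hanging_Node_in[OF y]
        by (rule ins_hanging_Un[OF y P set_tree_hanging_subset set_tree_hanging_subset disjI1[OF sep], symmetric])
      finally show ?thesis .
    next
      case 2
      have sep: "(\<forall>w\<in>insert x (set_tree r). y < w) \<and> (\<forall>z\<in>set_tree l. z < y)"
        using 2 Node.prems(1) by simp
      have ins_t: "ins x \<langle>l, y, r\<rangle> = \<langle>l, y, ins x r\<rangle>"
        using 2 by (auto dest: order.asym)
      have "hanging P (ins x \<langle>l, y, r\<rangle>) = hanging (P \<inter> set_tree r) (ins x r) \<union> hanging (P \<inter> set_tree l) l"
        unfolding ins_t hanging_Node_in[OF y] using xP by (simp add: Int_insert_right_if0 Un_commute)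
      also have "\<dots> = ins_hanging (P \<inter> set_tree r) x (hanging (P \<inter> set_tree r) r) \<union> hanging (P \<inter> set_tree l) l"
        using Node.IH(2)[OF _ tr] Node.prems(1,3) by simp
      also have "\<dots> = ins_hanging P x (hanging P \<langle>l, y, r\<rangle>)"
        using P unfolding hanging_Node_in[OF y] Un_commute[of "hanging (P \<inter> set_tree l) l"]
        by (intro ins_hanging_Un[OF y _ set_tree_hanging_subset set_tree_hanging_subset disjI2[OF sep], symmetric])
          auto
      finally show ?thesis .
    qed
  qed
qed

lemma bst_step_ins:
  assumes "bst_step s T T' c" and "bst T" and "x \<notin> set_tree T"
  shows "bst_step s (ins x T) (ins x T') c"
proof -
  obtain P where P: "s \<in> P" "top_part P T" "top_part P T'" "hanging P T' = hanging P T"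
    "bst T'" "set_tree T' = set_tree T" "c = card P"
    using assms(1) unfolding bst_step_def by blast
  have "x \<notin> P"
    using top_part_subset[OF P(2)] assms(3) by blast
  moreover have "hanging P (ins x T') = hanging P (ins x T)"
    using hanging_ins[OF P(5) P(3)] hanging_ins[OF assms(2) P(2) assms(3)] P(4,6) assms(3) by simp
  ultimately show ?thesis
    unfolding bst_step_def using P top_part_ins[OF P(2)] top_part_ins[OF P(3)] bst_ins[OF P(5)]
    by (intro exI[of _ P]) simp
qed

lemma serve_ins: "serve T S c \<Longrightarrow> bst T \<Longrightarrow> x \<notin> set_tree T \<Longrightarrow> serve (ins x T) S c"
proof (induction rule: serve.induct)
  case (serve_Nil T)
  show ?case by (rule serve.serve_Nil)
next
  case (serve_Cons s T T' c ss k)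
  have "bst T'" "set_tree T' = set_tree T"
    using serve_Cons.hyps(1) unfolding bst_step_def by auto
  then show ?case
    using serve_Cons bst_step_ins serve.serve_Cons by metis
qed

fun del_max :: "'a tree \<Rightarrow> 'a tree" where
  "del_max Leaf = Leaf"
| "del_max \<langle>l, y, r\<rangle> = (if r = Leaf then l else \<langle>l, y, del_max r\<rangle>)"

fun del :: "'a::linorder \<Rightarrow> 'a tree \<Rightarrow> 'a tree" where
  "del x Leaf = Leaf"
| "del x \<langle>l, y, r\<rangle> =
     (if x < y then \<langle>del x l, y, r\<rangle> else if y < x then \<langle>l, y, del x r\<rangle>
      else if l = Leaf then r else \<langle>del_max l, Max (set_tree l), r\<rangle>)"

lemma bst_Node_left_less_right:
  "bst \<langle>l, y, r\<rangle> \<Longrightarrow> a \<in> set_tree l \<Longrightarrow> b \<in> set_tree r \<Longrightarrow> a < b"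
  by (auto intro: less_trans)

lemma bst_Node_disjoint: "bst \<langle>l, y, r\<rangle> \<Longrightarrow> set_tree l \<inter> set_tree r = {}"
  using bst_Node_left_less_right by blast

lemma Max_set_tree_Node_Leaf: "bst \<langle>l, y, Leaf\<rangle> \<Longrightarrow> Max (set_tree \<langle>l, y, Leaf\<rangle>) = y"
  by (intro Max_eqI) (auto simp: less_imp_le)

lemma Max_set_tree_Node_right:
  assumes "bst \<langle>l, y, r\<rangle>" and "r \<noteq> Leaf"
  shows "Max (set_tree \<langle>l, y, r\<rangle>) = Max (set_tree r)" and "Max (set_tree r) \<in> set_tree r"
    and "y < Max (set_tree r)" and "Max (set_tree r) \<notin> set_tree l"
proof -
  show M: "Max (set_tree r) \<in> set_tree r"
    using assms(2) by (simp add: Max_in)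
  then show "y < Max (set_tree r)"
    using assms(1) by simp
  then show "Max (set_tree r) \<notin> set_tree l"
    using assms(1) by (auto dest: order.asym)
  have "z \<le> Max (set_tree r)" if "z \<in> set_tree \<langle>l, y, r\<rangle>" for z
    using that assms M bst_Node_left_less_right[OF assms(1) _ M] by (auto simp: less_imp_le)
  then show "Max (set_tree \<langle>l, y, r\<rangle>) = Max (set_tree r)"
    using M by (intro Max_eqI) auto
qed

lemma set_tree_del_max: "bst t \<Longrightarrow> set_tree (del_max t) = set_tree t - {Max (set_tree t)}"
proof (induction t)
  case (Node l y r)
  show ?case
  proof (cases "r = Leaf")
    case True
    then show ?thesis
      using Node.prems Max_set_tree_Node_Leaf[of l y] by auto
  next
    case False
    then show ?thesis
      using Node Max_set_tree_Node_right[OF Node.prems False] by auto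
  qed
qed simp

lemma bst_del_max: "bst t \<Longrightarrow> bst (del_max t)"
  by (induction t) (auto simp: set_tree_del_max)

lemma set_tree_del: "bst t \<Longrightarrow> set_tree (del x t) = set_tree t - {x}"
proof (induction t)
  case (Node l y r)
  consider "x < y" | "y < x" | "x = y"
    by (cases x y rule: linorder_cases) auto
  then show ?case
  proof cases
    case 3
    have "set_tree (del x \<langle>l, y, r\<rangle>) = set_tree l \<union> set_tree r"
      using 3 set_tree_del_max[of l] Max_in[of "set_tree l"] Node.prems by auto
    then show ?thesis
      using 3 Node.prems by auto
  qed (use Node in \<open>auto dest: order.asym\<close>)
qed simp

lemma bst_del: "bst t \<Longrightarrow> bst (del x t)"
proof (induction t)
  case (Node l y r)
  consider "x < y" | "y < x" | "x = y" "l = Leaf" | "x = y" "l \<noteq> Leaf"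
    by (cases x y rule: linorder_cases) auto
  then show ?case
  proof cases
    case 4
    have M: "Max (set_tree l) \<in> set_tree l"
      using 4 by (simp add: Max_in)
    have "z < Max (set_tree l)" if "z \<in> set_tree (del_max l)" for z
    proof -
      have "z \<in> set_tree l" "z \<noteq> Max (set_tree l)"
        using that Node.prems set_tree_del_max[of l] by auto
      then show ?thesis
        using Max_ge[of "set_tree l" z] by (simp add: order_less_le)
    qed
    moreover have "Max (set_tree l) < z" if "z \<in> set_tree r" for z
      using bst_Node_left_less_right[OF Node.prems M that] .
    ultimately show ?thesis
      using 4 Node.prems by (simp add: bst_del_max)
  qed (use Node in \<open>auto simp: set_tree_del dest: order.asym\<close>)
qed simp

lemma del_notin: "x \<notin> set_tree t \<Longrightarrow> del x t = t"
  by (induction t) auto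

lemma top_part_del_notin: "bst t \<Longrightarrow> top_part P t \<Longrightarrow> x \<notin> P \<Longrightarrow> top_part P (del x t)"
proof (induction t arbitrary: P)
  case (Node l y r)
  show ?case
  proof (cases "P = {}")
    case False
    with Node.prems have y: "y \<in> P" and P: "P \<subseteq> insert y (set_tree l \<union> set_tree r)"
      and tl: "top_part (P \<inter> set_tree l) l" and tr: "top_part (P \<inter> set_tree r) r" by auto
    have "P \<inter> set_tree (del x l) = P \<inter> set_tree l" "P \<inter> set_tree (del x r) = P \<inter> set_tree r"
      using Node.prems by (auto simp: set_tree_del)
    then show ?thesis
      using Node y P tl tr by (auto simp: set_tree_del)
  qed simp
qed simp

lemma hanging_del_notin:
  "bst t \<Longrightarrow> top_part P t \<Longrightarrow> x \<notin> P \<Longrightarrow> hanging P (del x t) = del x ` hanging P t - {Leaf}"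
proof (induction t arbitrary: P)
  case (Node l y r)
  show ?case
  proof (cases "P = {}")
    case True
    then show ?thesis
      by (auto simp: hanging_empty)
  next
    case False
    with Node.prems have y: "y \<in> P" and tl: "top_part (P \<inter> set_tree l) l"
      and tr: "top_part (P \<inter> set_tree r) r" by auto
    have bst_l: "bst l" and bst_r: "bst r"
      using Node.prems(1) by auto
    have Pl: "P \<inter> set_tree (del x l) = P \<inter> set_tree l" and Pr: "P \<inter> set_tree (del x r) = P \<inter> set_tree r"
      using Node.prems by (auto simp: set_tree_del)
    have x_notin_P_Int: "x \<notin> P \<inter> A" for A
      using Node.prems(3) by blast
    consider "x < y" | "y < x"
      using y Node.prems(3) by (cases x y rule: linorder_cases) auto
    then show ?thesis
    proof cases
      case 1
      have del_t: "del x \<langle>l, y, r\<rangle> = \<langle>del x l, y, r\<rangle>"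
        using 1 by simp
      have "del x G = G" if "G \<in> hanging (P \<inter> set_tree r) r" for G
        using set_tree_hanging_subset[OF that] 1 Node.prems(1) by (intro del_notin) (auto dest: order.asym)
      then show ?thesis
        unfolding del_t hanging_Node_in[OF y] Pl Node.IH(1)[OF bst_l tl x_notin_P_Int]
        by (simp add: image_Un_fixed_right_minus_Leaf Leaf_notin_hanging)
    next
      case 2
      have del_t: "del x \<langle>l, y, r\<rangle> = \<langle>l, y, del x r\<rangle>"
        using 2 by (auto dest: order.asym)
      have "del x G = G" if "G \<in> hanging (P \<inter> set_tree l) l" for G
        using set_tree_hanging_subset[OF that] 2 Node.prems(1) by (intro del_notin) (auto dest: order.asym)
      then show ?thesis
        unfolding del_t hanging_Node_in[OF y] Pr Node.IH(2)[OF bst_r tr x_notin_P_Int]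
        by (simp add: image_Un_fixed_left_minus_Leaf Leaf_notin_hanging)
    qed
  qed
qed simp

lemma top_part_del_max: "bst t \<Longrightarrow> top_part P t \<Longrightarrow> top_part (P - {Max (set_tree t)}) (del_max t)"
proof (induction t arbitrary: P)
  case (Node l y r)
  show ?case
  proof (cases "P = {}")
    case False
    with Node.prems have y: "y \<in> P" and P: "P \<subseteq> insert y (set_tree l \<union> set_tree r)"
      and tl: "top_part (P \<inter> set_tree l) l" and tr: "top_part (P \<inter> set_tree r) r" by auto
    show ?thesis
    proof (cases "r = Leaf")
      case True
      then have "P - {Max (set_tree \<langle>l, y, r\<rangle>)} = P \<inter> set_tree l"
        using Node.prems(1) Max_set_tree_Node_Leaf[of l y] P by auto
      then show ?thesis
        using True tl by simp
    next
      case False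
      note M = Max_set_tree_Node_right[OF Node.prems(1) False]
      let ?Q = "P - {Max (set_tree r)}"
      have "top_part ((P \<inter> set_tree r) - {Max (set_tree r)}) (del_max r)"
        using Node.IH(2) Node.prems(1) tr by simp
      moreover have "?Q \<inter> set_tree (del_max r) = (P \<inter> set_tree r) - {Max (set_tree r)}"
        using Node.prems(1) by (auto simp: set_tree_del_max)
      moreover have "?Q \<inter> set_tree l = P \<inter> set_tree l"
        using M(4) by auto
      moreover have "?Q \<subseteq> insert y (set_tree l \<union> set_tree (del_max r))"
        using P Node.prems(1) by (auto simp: set_tree_del_max)
      ultimately have "top_part ?Q \<langle>l, y, del_max r\<rangle>"
        using y M(3) tl by (simp add: less_imp_neq)
      then show ?thesis
        using False M(1) by simp
    qed
  qed simp
qed simp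

definition del_max_if_meets :: "'a set \<Rightarrow> 'a tree \<Rightarrow> 'a tree" where
  "del_max_if_meets A H = (if A \<inter> set_tree H = {} then H else del_max H)"

lemma hanging_del_max:
  "bst t \<Longrightarrow> top_part P t \<Longrightarrow>
   hanging (P - {Max (set_tree t)}) (del_max t) = del_max_if_meets {Max (set_tree t)} ` hanging P t - {Leaf}"
proof (induction t arbitrary: P)
  case (Node l y r)
  let ?f = "del_max_if_meets {Max (set_tree \<langle>l, y, r\<rangle>)}"
  show ?case
  proof (cases "P = {}")
    case True
    have "Max (set_tree \<langle>l, y, r\<rangle>) \<in> set_tree \<langle>l, y, r\<rangle>"
      by (rule Max_in) simp_all
    then show ?thesis
      using True by (auto simp: hanging_empty del_max_if_meets_def simp del: del_max.simps)
  next
    case False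
    with Node.prems have y: "y \<in> P" and P: "P \<subseteq> insert y (set_tree l \<union> set_tree r)"
      and tr: "top_part (P \<inter> set_tree r) r" by auto
    show ?thesis
    proof (cases "r = Leaf")
      case True
      then have M: "Max (set_tree \<langle>l, y, r\<rangle>) = y"
        using Node.prems(1) Max_set_tree_Node_Leaf[of l y] by simp
      have "?f H = H" if "H \<in> hanging (P \<inter> set_tree l) l" for H
        using set_tree_hanging_subset[OF that] Node.prems(1) M by (auto simp: del_max_if_meets_def)
      moreover have "hanging (P - {y}) l = hanging (P \<inter> set_tree l) l"
        using P True Node.prems(1) by (intro hanging_cong) auto
      moreover have "hanging P \<langle>l, y, r\<rangle> = hanging (P \<inter> set_tree l) l"
        using True hanging_Node_in[OF y] by simp
      ultimately show ?thesis
        using True image_Un_fixed_right_minus_Leaf[where Hs = "{}"] Leaf_notin_hanging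
        unfolding M by simp
    next
      case False
      note M = Max_set_tree_Node_right[OF Node.prems(1) False]
      let ?Q = "P - {Max (set_tree r)}"
      have "?f H = H" if "H \<in> hanging (P \<inter> set_tree l) l" for H
        using set_tree_hanging_subset[OF that] M(1,4) by (auto simp: del_max_if_meets_def)
      moreover have "hanging ?Q (del_max r) = hanging ((P \<inter> set_tree r) - {Max (set_tree r)}) (del_max r)"
        using Node.prems(1) by (intro hanging_cong) (auto simp: set_tree_del_max)
      moreover have "hanging ?Q l = hanging (P \<inter> set_tree l) l"
        using M(4) by (intro hanging_cong) auto
      moreover have "y \<in> ?Q"
        using y M(3) by simp
      ultimately show ?thesis
        using False Node.IH(2) Node.prems(1) tr
        unfolding M(1) hanging_Node_in[OF y]
        by (simp add: image_Un_fixed_left_minus_Leaf Leaf_notin_hanging)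
    qed
  qed
qed simp

text \<open>Empty if x has no predecessor in K, a singleton otherwise.\<close>

definition predecessor :: "'a::linorder \<Rightarrow> 'a set \<Rightarrow> 'a set" where
  "predecessor x K = {a \<in> K. a < x \<and> (\<forall>b\<in>K. b < x \<longrightarrow> b \<le> a)}"

lemma predecessor_subset: "predecessor x K \<subseteq> K"
  by (auto simp: predecessor_def)

lemma predecessor_less: "a \<in> predecessor x K \<Longrightarrow> a < x"
  by (simp add: predecessor_def)

lemma predecessor_eqI:
  "a \<in> K \<Longrightarrow> a < x \<Longrightarrow> (\<And>b. b \<in> K \<Longrightarrow> b < x \<Longrightarrow> b \<le> a) \<Longrightarrow> predecessor x K = {a}"
  by (auto simp: predecessor_def intro: order.antisym)

lemma predecessor_eq_empty: "(\<And>b. b \<in> K \<Longrightarrow> \<not> b < x) \<Longrightarrow> predecessor x K = {}"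
  by (auto simp: predecessor_def)

lemma card_predecessor_le: "card (predecessor x K) \<le> 1"
proof (cases "predecessor x K = {}")
  case False
  then obtain a where a: "a \<in> predecessor x K"
    by blast
  then have "predecessor x K = {a}"
    by (intro predecessor_eqI) (auto simp: predecessor_def)
  then show ?thesis
    by simp
qed simp

lemma predecessor_Node_less:
  "bst \<langle>l, y, r\<rangle> \<Longrightarrow> x < y \<Longrightarrow> predecessor x (set_tree \<langle>l, y, r\<rangle>) = predecessor x (set_tree l)"
  unfolding predecessor_def by fastforce

lemma predecessor_Node_greater:
  assumes "bst \<langle>l, y, r\<rangle>" and "y < x"
  shows "predecessor x (set_tree \<langle>l, y, r\<rangle>) =
           (if predecessor x (set_tree r) = {} then {y} else predecessor x (set_tree r))"
proof (cases "\<exists>z\<in>set_tree r. z < x")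
  case True
  let ?m = "Max {z \<in> set_tree r. z < x}"
  have "?m \<in> {z \<in> set_tree r. z < x}"
    using True by (intro Max_in) auto
  then have m: "?m \<in> set_tree r" "?m < x"
    by auto
  have m_ge: "b \<le> ?m" if "b \<in> set_tree r" "b < x" for b
    using that by (intro Max_ge) auto
  have "predecessor x (set_tree r) = {?m}"
    using m m_ge by (rule predecessor_eqI)
  moreover have "predecessor x (set_tree \<langle>l, y, r\<rangle>) = {?m}"
  proof (rule predecessor_eqI)
    fix b
    assume "b \<in> set_tree \<langle>l, y, r\<rangle>" and "b < x"
    then show "b \<le> ?m"
      using m_ge bst_Node_left_less_right[OF assms(1) _ m(1)] assms(1) m(1)
      by (auto intro: less_imp_le)
  qed (use m in auto)
  ultimately show ?thesis
    by simp
next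
  case False
  then have "predecessor x (set_tree r) = {}"
    by (intro predecessor_eq_empty) auto
  moreover have "predecessor x (set_tree \<langle>l, y, r\<rangle>) = {y}"
    using assms False by (intro predecessor_eqI) (auto intro: less_imp_le)
  ultimately show ?thesis
    by simp
qed

lemma predecessor_Node_root:
  assumes "bst \<langle>l, y, r\<rangle>"
  shows "predecessor y (set_tree \<langle>l, y, r\<rangle>) = (if l = Leaf then {} else {Max (set_tree l)})"
proof (cases "l = Leaf")
  case True
  then have "predecessor y (set_tree \<langle>l, y, r\<rangle>) = {}"
    using assms by (intro predecessor_eq_empty) (auto dest: order.asym)
  then show ?thesis
    using True by simp
next
  case False
  then have "Max (set_tree l) \<in> set_tree l"
    by (simp add: Max_in)
  then have "predecessor y (set_tree \<langle>l, y, r\<rangle>) = {Max (set_tree l)}"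
    using assms by (intro predecessor_eqI) (auto dest: order.asym)
  then show ?thesis
    using False by simp
qed

lemma top_part_del_root:
  assumes "bst \<langle>l, y, r\<rangle>" and "top_part P \<langle>l, y, r\<rangle>" and "y \<in> P"
  shows "top_part (P - {y} \<union> predecessor y (set_tree \<langle>l, y, r\<rangle>)) (del y \<langle>l, y, r\<rangle>)"
proof -
  from assms(2,3) have P: "P \<subseteq> insert y (set_tree l \<union> set_tree r)"
    and tl: "top_part (P \<inter> set_tree l) l" and tr: "top_part (P \<inter> set_tree r) r" by auto
  show ?thesis
  proof (cases "l = Leaf")
    case True
    then have "P - {y} \<union> predecessor y (set_tree \<langle>l, y, r\<rangle>) = P \<inter> set_tree r"
      using predecessor_Node_root[OF assms(1)] P assms(1) by auto
    then show ?thesis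
      using True tr by simp
  next
    case False
    let ?m = "Max (set_tree l)"
    let ?Q = "P - {y} \<union> {?m}"
    have m: "?m \<in> set_tree l"
      using False by (simp add: Max_in)
    have "top_part ?Q \<langle>del_max l, ?m, r\<rangle>"
    proof (rule top_part_NodeI)
      have "?Q \<inter> set_tree (del_max l) = P \<inter> set_tree l - {?m}"
        using assms(1) by (auto simp: set_tree_del_max)
      then show "top_part (?Q \<inter> set_tree (del_max l)) (del_max l)"
        using top_part_del_max[OF _ tl] assms(1) by simp
      have "?Q \<inter> set_tree r = P \<inter> set_tree r"
        using assms(1) m by (auto dest: bst_Node_left_less_right[OF assms(1)])
      then show "top_part (?Q \<inter> set_tree r) r"
        using tr by simp
      show "?Q \<subseteq> insert ?m (set_tree (del_max l) \<union> set_tree r)"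
        using P assms(1) by (auto simp: set_tree_del_max)
    qed simp
    then show ?thesis
      using False predecessor_Node_root[OF assms(1)] by simp
  qed
qed

lemma hanging_del_root:
  assumes "bst \<langle>l, y, r\<rangle>" and "top_part P \<langle>l, y, r\<rangle>" and "y \<in> P"
  shows "hanging (P - {y} \<union> predecessor y (set_tree \<langle>l, y, r\<rangle>)) (del y \<langle>l, y, r\<rangle>) =
           del_max_if_meets (predecessor y (set_tree \<langle>l, y, r\<rangle>)) ` hanging P \<langle>l, y, r\<rangle> - {Leaf}"
proof -
  from assms(2,3) have P: "P \<subseteq> insert y (set_tree l \<union> set_tree r)"
    and tl: "top_part (P \<inter> set_tree l) l" by auto
  show ?thesis
  proof (cases "l = Leaf")
    case True
    then have "P - {y} \<union> predecessor y (set_tree \<langle>l, y, r\<rangle>) = P \<inter> set_tree r"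
      using predecessor_Node_root[OF assms(1)] P assms(1) by auto
    moreover have "predecessor y (set_tree \<langle>l, y, r\<rangle>) = {}"
      using True predecessor_Node_root[OF assms(1)] by simp
    ultimately show ?thesis
      unfolding hanging_Node_in[OF assms(3)] using True by (simp add: del_max_if_meets_def)
  next
    case False
    let ?m = "Max (set_tree l)"
    let ?Q = "P - {y} \<union> {?m}"
    have m: "?m \<in> set_tree l"
      using False by (simp add: Max_in)
    have m_notin_r: "?m \<notin> set_tree r"
      using m bst_Node_left_less_right[OF assms(1) m] by blast
    have "hanging ?Q \<langle>del_max l, ?m, r\<rangle> =
        hanging (P \<inter> set_tree l - {?m}) (del_max l) \<union> hanging (P \<inter> set_tree r) r"
    proof -
      have "?Q \<inter> set_tree (del_max l) = P \<inter> set_tree l - {?m}"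
        using assms(1) by (auto simp: set_tree_del_max)
      moreover have "?Q \<inter> set_tree r = P \<inter> set_tree r"
        using assms(1) m_notin_r by auto
      ultimately show ?thesis
        by (subst hanging_Node_in) simp_all
    qed
    also have "\<dots> = del_max_if_meets {?m} ` hanging P \<langle>l, y, r\<rangle> - {Leaf}"
    proof -
      have "del_max_if_meets {?m} G = G" if "G \<in> hanging (P \<inter> set_tree r) r" for G
        using set_tree_hanging_subset[OF that] m_notin_r by (auto simp: del_max_if_meets_def)
      then show ?thesis
        unfolding hanging_Node_in[OF assms(3)] using hanging_del_max[OF _ tl] assms(1)
        by (simp add: image_Un_fixed_right_minus_Leaf Leaf_notin_hanging)
    qed
    finally show ?thesis
      using False predecessor_Node_root[OF assms(1)] by simp
  qed
qed

text \<open>Deleting a touched key x: its predecessor takes its place in the top part. If the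
  predecessor lay in a hanging subtree, it was that subtree's maximum and leaves it.\<close>

definition del_top_part :: "'a::linorder \<Rightarrow> 'a set \<Rightarrow> 'a tree \<Rightarrow> bool" where
  "del_top_part x P t \<longleftrightarrow>
     (let A = predecessor x (set_tree t); Q = P - {x} \<union> A in
      top_part Q (del x t) \<and> hanging Q (del x t) = del_max_if_meets A ` hanging P t - {Leaf})"

lemma del_top_part_Node_less:
  assumes "bst \<langle>l, y, r\<rangle>" and "top_part P \<langle>l, y, r\<rangle>" and "x \<in> P" and "x < y"
    and IH: "del_top_part x (P \<inter> set_tree l) l"
  shows "del_top_part x P \<langle>l, y, r\<rangle>"
proof -
  from assms(2,3) have y: "y \<in> P" and P: "P \<subseteq> insert y (set_tree l \<union> set_tree r)"
    and tr: "top_part (P \<inter> set_tree r) r" by auto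
  let ?A = "predecessor x (set_tree l)"
  let ?Q = "P - {x} \<union> ?A"
  have A: "?A \<subseteq> set_tree l - {x}"
    using predecessor_subset predecessor_less by blast
  have xl: "x \<in> set_tree l"
    using assms P by (auto dest: order.asym)
  have Ql: "?Q \<inter> set_tree (del x l) = P \<inter> set_tree l - {x} \<union> ?A"
    using A assms(1) by (auto simp: set_tree_del)
  have Qr: "?Q \<inter> set_tree r = P \<inter> set_tree r"
    using A xl bst_Node_disjoint[OF assms(1)] by blast
  have yQ: "y \<in> ?Q"
    using y assms(4) by (auto dest: order.asym)
  have "top_part ?Q \<langle>del x l, y, r\<rangle>"
  proof (rule top_part_NodeI)
    show "?Q \<subseteq> insert y (set_tree (del x l) \<union> set_tree r)"
      using P A assms(1) by (auto simp: set_tree_del)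
  qed (use yQ Ql Qr IH tr in \<open>auto simp: del_top_part_def Let_def\<close>)
  moreover have "hanging ?Q \<langle>del x l, y, r\<rangle> = del_max_if_meets ?A ` hanging P \<langle>l, y, r\<rangle> - {Leaf}"
  proof -
    have "del_max_if_meets ?A G = G" if "G \<in> hanging (P \<inter> set_tree r) r" for G
      using set_tree_hanging_subset[OF that] A bst_Node_disjoint[OF assms(1)]
      by (auto simp: del_max_if_meets_def)
    then show ?thesis
      unfolding hanging_Node_in[OF y] hanging_Node_in[OF yQ] Ql Qr
      using IH by (simp add: del_top_part_def Let_def image_Un_fixed_right_minus_Leaf Leaf_notin_hanging)
  qed
  ultimately show ?thesis
    using assms(4) predecessor_Node_less[OF assms(1,4)] by (simp add: del_top_part_def)
qed

lemma del_top_part_Node_greater: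
  assumes "bst \<langle>l, y, r\<rangle>" and "top_part P \<langle>l, y, r\<rangle>" and "x \<in> P" and "y < x"
    and IH: "del_top_part x (P \<inter> set_tree r) r"
  shows "del_top_part x P \<langle>l, y, r\<rangle>"
proof -
  from assms(2,3) have y: "y \<in> P" and P: "P \<subseteq> insert y (set_tree l \<union> set_tree r)"
    and tl: "top_part (P \<inter> set_tree l) l" by auto
  let ?Ar = "predecessor x (set_tree r)"
  let ?A = "if ?Ar = {} then {y} else ?Ar"
  let ?Q = "P - {x} \<union> ?A"
  have Ar: "?Ar \<subseteq> set_tree r - {x}"
    using predecessor_subset predecessor_less by blast
  have xr: "x \<in> set_tree r"
    using assms P by (auto dest: order.asym)
  have Qr: "?Q \<inter> set_tree (del x r) = P \<inter> set_tree r - {x} \<union> ?Ar"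
    using Ar assms(1) by (auto simp: set_tree_del)
  have Ql: "?Q \<inter> set_tree l = P \<inter> set_tree l"
    using Ar xr assms(1) bst_Node_disjoint[OF assms(1)] by auto
  have del_t: "del x \<langle>l, y, r\<rangle> = \<langle>l, y, del x r\<rangle>"
    using assms(4) by (auto dest: order.asym)
  have yQ: "y \<in> ?Q"
    using y assms(4) by (auto dest: order.asym)
  have "top_part ?Q \<langle>l, y, del x r\<rangle>"
  proof (rule top_part_NodeI)
    show "?Q \<subseteq> insert y (set_tree l \<union> set_tree (del x r))"
      using P Ar assms(1) by (auto simp: set_tree_del)
  qed (use yQ Ql Qr IH tl in \<open>auto simp: del_top_part_def Let_def\<close>)
  moreover have "hanging ?Q \<langle>l, y, del x r\<rangle> = del_max_if_meets ?A ` hanging P \<langle>l, y, r\<rangle> - {Leaf}"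
  proof -
    have "del_max_if_meets ?A G = G" if "G \<in> hanging (P \<inter> set_tree l) l" for G
      using set_tree_hanging_subset[OF that] Ar assms(1) bst_Node_disjoint[OF assms(1)]
      by (auto simp: del_max_if_meets_def)
    moreover have "del_max_if_meets ?A ` hanging (P \<inter> set_tree r) r =
        del_max_if_meets ?Ar ` hanging (P \<inter> set_tree r) r"
    proof (rule image_cong)
      fix G
      assume "G \<in> hanging (P \<inter> set_tree r) r"
      then have "y \<notin> set_tree G"
        using set_tree_hanging_subset assms(1) by fastforce
      then show "del_max_if_meets ?A G = del_max_if_meets ?Ar G"
        by (simp add: del_max_if_meets_def)
    qed simp
    ultimately show ?thesis
      unfolding hanging_Node_in[OF y] hanging_Node_in[OF yQ] Ql Qr
      using IH by (simp add: del_top_part_def Let_def image_Un_fixed_left_minus_Leaf Leaf_notin_hanging)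
  qed
  ultimately show ?thesis
    unfolding del_top_part_def del_t using predecessor_Node_greater[OF assms(1,4)] by simp
qed

lemma del_top_part:
  "bst t \<Longrightarrow> top_part P t \<Longrightarrow> x \<in> P \<Longrightarrow> del_top_part x P t"
proof (induction t arbitrary: P)
  case (Node l y r)
  from Node.prems have y: "y \<in> P" and P: "P \<subseteq> insert y (set_tree l \<union> set_tree r)"
    and tl: "top_part (P \<inter> set_tree l) l" and tr: "top_part (P \<inter> set_tree r) r" by auto
  consider "x < y" | "y < x" | "x = y"
    by (cases x y rule: linorder_cases) auto
  then show ?case
  proof cases
    case 1
    then have "x \<in> P \<inter> set_tree l"
      using Node.prems P by (auto dest: order.asym)
    then show ?thesis
      using del_top_part_Node_less[OF Node.prems 1] Node.IH(1)[OF _ tl] Node.prems(1) by simp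
  next
    case 2
    then have "x \<in> P \<inter> set_tree r"
      using Node.prems P by (auto dest: order.asym)
    then show ?thesis
      using del_top_part_Node_greater[OF Node.prems 2] Node.IH(2)[OF _ tr] Node.prems(1) by simp
  next
    case 3
    then show ?thesis
      using top_part_del_root[OF Node.prems(1,2)] hanging_del_root[OF Node.prems(1,2)] y
      by (simp add: del_top_part_def)
  qed
qed simp

lemma card_Diff_Un_le:
  assumes "finite P" and "x \<in> P" and "card A \<le> 1"
  shows "card (P - {x} \<union> A) \<le> card P"
proof -
  have "card (P - {x} \<union> A) \<le> card (P - {x}) + card A"
    by (rule card_Un_le)
  also have "\<dots> \<le> card P"
    using assms card_Diff1_less[OF assms(1,2)] by linarith
  finally show ?thesis .
qed

lemma bst_step_del:
  assumes "bst_step s T T' c" and "bst T" and "x \<noteq> s"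
  shows "\<exists>c'\<le>c. bst_step s (del x T) (del x T') c'"
proof -
  obtain P where P: "s \<in> P" "top_part P T" "top_part P T'" "hanging P T' = hanging P T"
    "bst T'" "set_tree T' = set_tree T" "c = card P"
    using assms(1) unfolding bst_step_def by blast
  have keys: "set_tree (del x T') = set_tree (del x T)" and bst': "bst (del x T')"
    using set_tree_del[OF assms(2)] set_tree_del[OF P(5)] P(6) bst_del[OF P(5)] by simp_all
  show ?thesis
  proof (cases "x \<in> P")
    case False
    have "bst_step s (del x T) (del x T') c"
      unfolding bst_step_def
      using P keys bst' False top_part_del_notin[OF assms(2) P(2)] top_part_del_notin[OF P(5,3)]
        hanging_del_notin[OF assms(2) P(2)] hanging_del_notin[OF P(5,3)]
      by (intro exI[of _ P]) simp
    then show ?thesis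
      by blast
  next
    case True
    \<comment> \<open>The new touched set depends only on the keys, so it is the same for T and T'.\<close>
    let ?Q = "P - {x} \<union> predecessor x (set_tree T)"
    have "bst_step s (del x T) (del x T') (card ?Q)"
      unfolding bst_step_def
      using P keys bst' True assms(3) del_top_part[OF assms(2) P(2)] del_top_part[OF P(5,3)]
      by (intro exI[of _ ?Q]) (simp add: del_top_part_def Let_def)
    moreover have "card ?Q \<le> c"
      unfolding P(7) using True finite_subset[OF top_part_subset[OF P(2)]]
      by (intro card_Diff_Un_le card_predecessor_le) simp_all
    ultimately show ?thesis
      by blast
  qed
qed

lemma serve_del: "serve T S c \<Longrightarrow> bst T \<Longrightarrow> x \<notin> set S \<Longrightarrow> \<exists>c'\<le>c. serve (del x T) S c'"
proof (induction rule: serve.induct)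
  case (serve_Nil T)
  then show ?case
    using serve.serve_Nil by blast
next
  case (serve_Cons s T T' c ss k)
  have "bst T'"
    using serve_Cons.hyps(1) unfolding bst_step_def by auto
  then obtain k' where "k' \<le> k" "serve (del x T') ss k'"
    using serve_Cons by auto
  moreover obtain c' where "c' \<le> c" "bst_step s (del x T) (del x T') c'"
    using bst_step_del[OF serve_Cons.hyps(1) serve_Cons.prems(1)] serve_Cons.prems(2) by auto
  ultimately show ?case
    using serve.serve_Cons add_mono by blast
qed

lemma cInf_eq_if_subset_dominated:
  fixes A B :: "'a::{conditionally_complete_lattice, order_bot} set"
  assumes "A \<subseteq> B" and "\<And>b. b \<in> B \<Longrightarrow> \<exists>a\<in>A. a \<le> b"
  shows "Inf A = Inf B"
proof (cases "B = {}")
  case False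
  then have "A \<noteq> {}"
    using assms(2) by blast
  then show ?thesis
    using False assms by (intro order.antisym cInf_mono cInf_superset_mono) auto
qed (use assms(1) in simp)

lemma OPT_keys_insert:
  assumes "x \<notin> K" and "set S \<subseteq> K"
  shows "OPT_keys (insert x K) S = OPT_keys K S"
  unfolding OPT_keys_def
proof (rule cInf_eq_if_subset_dominated[symmetric])
  show "serve_costs K S \<subseteq> serve_costs (insert x K) S"
    using assms(1) serve_ins bst_ins unfolding serve_costs_def by fastforce
  fix c
  assume "c \<in> serve_costs (insert x K) S"
  then obtain T where T: "bst T" "set_tree T = insert x K" "serve T S c"
    unfolding serve_costs_def by auto
  then obtain c' where "c' \<le> c" "serve (del x T) S c'"
    using serve_del assms by blast
  moreover have "bst (del x T)" "set_tree (del x T) = K"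
    using T assms(1) by (simp_all add: bst_del set_tree_del)
  ultimately show "\<exists>c'\<in>serve_costs K S. c' \<le> c"
    unfolding serve_costs_def by blast
qed

theorem mainTheorem15:
  fixes n :: nat and S :: "rat list" and X :: "rat set"
  assumes "set S \<subseteq> nset n"
    and "finite X"
    and "X \<inter> nset n = {}"
  shows "OPT n S = OPT_X n X S"
  using assms(2,3)
proof (induction X rule: finite_induct)
  case (insert x X)
  then have "OPT_keys (insert x (nset n \<union> X)) S = OPT_keys (nset n \<union> X) S"
    using assms(1) by (intro OPT_keys_insert) auto
  with insert show ?case
    by (simp add: OPT_X_def)
qed (simp add: OPT_def OPT_X_def)

end
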